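(* Let $W$ be the Witt algebra with basis $\{x_n\mid n\in\mathbb{Z}\}$ and bracket $[x_m,x_n]=(n-m)x_{m+n}$. Let $(V_1,\cdot)$ and $(V_2,* )$ be left-symmetric algebra structures on the underlying space of $W$, each with commutator equal to the bracket of $W$, given by $x_m\cdot x_n=f_1(m,n)x_{m+n}$ and $x_m*x_n=f_2(m,n)x_{m+n}$. If $V_1$ and $V_2$ are isomorphic as left-symmetric algebras, then either $f_1(m,n)=f_2(m,n)$ for all $m,n$, or $f_1(m,n)=-f_2(-m,-n)$ for all $m,n$.
   Context: A left-symmetric algebra is a vector space with bilinear product satisfying $(xy)z-x(yz)=(yx)z-y(xz)$ for all $x,y,z$. *)

theory Defs
  imports Complex_Main
begin

text \<open>The underlying space of the Witt algebra over the complex numbers: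
  finitely supported coefficient functions; the function a represents
  the finite sum of a n times x_n over n.\<close>
definition witt_space :: "(int \<Rightarrow> complex) set" where
  "witt_space = {a. finite {n. a n \<noteq> 0}}"

text \<open>Bilinear product determined on the basis by x_m x_n = f(m,n) x_(m+n).\<close>
definition graded_mult ::
  "(int \<Rightarrow> int \<Rightarrow> complex) \<Rightarrow> (int \<Rightarrow> complex) \<Rightarrow> (int \<Rightarrow> complex) \<Rightarrow> (int \<Rightarrow> complex)" where
  "graded_mult f a b = (\<lambda>k. \<Sum>m\<in>{n. a n \<noteq> 0}. a m * b (k - m) * f m (k - m))"

definition witt_bracket :: "(int \<Rightarrow> complex) \<Rightarrow> (int \<Rightarrow> complex) \<Rightarrow> (int \<Rightarrow> complex)" where
  "witt_bracket = graded_mult (\<lambda>m n. of_int (n - m))"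

definition compatible_LSA_on_witt :: "(int \<Rightarrow> int \<Rightarrow> complex) \<Rightarrow> bool" where
  "compatible_LSA_on_witt f \<longleftrightarrow>
     (\<forall>x\<in>witt_space. \<forall>y\<in>witt_space. \<forall>z\<in>witt_space.
        (\<forall>k. graded_mult f (graded_mult f x y) z k - graded_mult f x (graded_mult f y z) k
      = graded_mult f (graded_mult f y x) z k - graded_mult f y (graded_mult f x z) k)) \<and>
     (\<forall>x\<in>witt_space. \<forall>y\<in>witt_space.
        (\<forall>k. graded_mult f x y k - graded_mult f y x k = witt_bracket x y k))"

definition LSA_isomorphic :: "(int \<Rightarrow> int \<Rightarrow> complex) \<Rightarrow> (int \<Rightarrow> int \<Rightarrow> complex) \<Rightarrow> bool" where
  "LSA_isomorphic f1 f2 \<longleftrightarrow>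
     (\<exists>\<phi>. bij_betw \<phi> witt_space witt_space \<and>
        (\<forall>x\<in>witt_space. \<forall>y\<in>witt_space. \<phi> (\<lambda>n. x n + y n) = (\<lambda>n. \<phi> x n + \<phi> y n)) \<and>
        (\<forall>c. \<forall>x\<in>witt_space. \<phi> (\<lambda>n. c * x n) = (\<lambda>n. c * \<phi> x n)) \<and>
        (\<forall>x\<in>witt_space. \<forall>y\<in>witt_space.
           \<phi> (graded_mult f1 x y) = graded_mult f2 (\<phi> x) (\<phi> y)))"

end

theory Submission
  imports Defs
begin

text \<open>An isomorphism \<open>\<phi>\<close> preserves the commutator, i.e. the Witt bracket, so \<open>h = \<phi> x\<^sub>0\<close>
  acts on each \<open>\<phi> x\<^sub>n\<close> by \<open>ad h\<close> with eigenvalue \<open>n\<close>. Comparing extreme degrees shows that an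
  eigenvector of \<open>ad h\<close> cannot reach beyond a nonzero top (or bottom) degree of \<open>h\<close>; as \<open>\<phi>\<close> is
  onto, \<open>h\<close> must be a multiple \<open>c x\<^sub>0\<close>, and then the eigenvalue equations force \<open>c = \<epsilon> = \<plusminus>1\<close> and
  \<open>\<phi> x\<^sub>n = a\<^sub>n x\<^sub>\<epsilon>\<^sub>n\<close>. Writing out \<open>\<phi>(x\<^sub>m x\<^sub>n) = \<phi> x\<^sub>m * \<phi> x\<^sub>n\<close> and antisymmetrising shows
  that \<open>\<epsilon> a\<close> is multiplicative, which leaves \<open>f\<^sub>1(m,n) = \<epsilon> f\<^sub>2(\<epsilon> m, \<epsilon> n)\<close>.\<close>

definition witt_basis :: "int \<Rightarrow> int \<Rightarrow> complex" where
  "witt_basis n = (\<lambda>k. if k = n then 1 else 0)"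

definition witt_linear :: "((int \<Rightarrow> complex) \<Rightarrow> (int \<Rightarrow> complex)) \<Rightarrow> bool" where
  "witt_linear \<phi> \<longleftrightarrow>
     (\<forall>x\<in>witt_space. \<forall>y\<in>witt_space. \<phi> (\<lambda>n. x n + y n) = (\<lambda>n. \<phi> x n + \<phi> y n)) \<and>
     (\<forall>c. \<forall>x\<in>witt_space. \<phi> (\<lambda>n. c * x n) = (\<lambda>n. c * \<phi> x n))"

lemma LSA_isomorphic_iff:
  "LSA_isomorphic f1 f2 \<longleftrightarrow>
     (\<exists>\<phi>. bij_betw \<phi> witt_space witt_space \<and> witt_linear \<phi> \<and>
        (\<forall>x\<in>witt_space. \<forall>y\<in>witt_space. \<phi> (graded_mult f1 x y) = graded_mult f2 (\<phi> x) (\<phi> y)))"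
  unfolding LSA_isomorphic_def witt_linear_def by blast

lemma witt_basis_in_space: "witt_basis n \<in> witt_space"
  unfolding witt_space_def witt_basis_def by simp

lemma zero_in_witt_space: "(\<lambda>k. 0) \<in> witt_space"
  unfolding witt_space_def by simp

lemma witt_space_scale: "x \<in> witt_space \<Longrightarrow> (\<lambda>k. c * x k) \<in> witt_space"
  unfolding witt_space_def by (auto elim: finite_subset[rotated])

lemma witt_space_sum_basis:
  assumes "finite F"
  shows "(\<lambda>k. \<Sum>n\<in>F. c n * witt_basis n k) \<in> witt_space"
proof -
  have "(\<Sum>n\<in>F. c n * witt_basis n k) = (if k \<in> F then c k else 0)" for k
    using assms by (simp add: witt_basis_def if_distrib sum.delta cong: if_cong)
  then have "{k. (\<Sum>n\<in>F. c n * witt_basis n k) \<noteq> 0} \<subseteq> F" by auto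
  then show ?thesis using assms unfolding witt_space_def by (auto elim: finite_subset)
qed

lemma witt_space_basis_expansion:
  assumes "x \<in> witt_space"
  shows "x = (\<lambda>k. \<Sum>n\<in>{n. x n \<noteq> 0}. x n * witt_basis n k)"
proof (rule ext)
  fix k
  have "(\<Sum>n\<in>{n. x n \<noteq> 0}. x n * witt_basis n k) = (\<Sum>n\<in>{n. x n \<noteq> 0}. if k = n then x n else 0)"
    by (rule sum.cong) (auto simp: witt_basis_def)
  also have "\<dots> = x k" using assms unfolding witt_space_def by (simp add: sum.delta)
  finally show "x k = (\<Sum>n\<in>{n. x n \<noteq> 0}. x n * witt_basis n k)" by simp
qed

lemma graded_mult_scaled_basis_left:
  "graded_mult f (\<lambda>k. a * witt_basis m k) y k = a * y (k - m) * f m (k - m)"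
proof (cases "a = 0")
  case False
  then have "{n. a * witt_basis m n \<noteq> 0} = {m}" by (auto simp: witt_basis_def)
  then show ?thesis by (simp add: graded_mult_def witt_basis_def)
qed (simp add: graded_mult_def)

lemma graded_mult_basis_left: "graded_mult f (witt_basis m) y k = y (k - m) * f m (k - m)"
  using graded_mult_scaled_basis_left[of f 1 m y k] by simp

lemma graded_mult_basis:
  "graded_mult f (witt_basis m) (witt_basis n) = (\<lambda>k. f m n * witt_basis (m + n) k)"
  by (rule ext) (unfold graded_mult_basis_left, auto simp: witt_basis_def)

lemma witt_bracket_eq_sum:
  "witt_bracket a b k = (\<Sum>j\<in>{n. a n \<noteq> 0}. a j * b (k - j) * of_int (k - j - j))"
  by (simp add: witt_bracket_def graded_mult_def)

lemma compatible_LSA_commutator_basis: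
  assumes "compatible_LSA_on_witt f"
  shows "f m n - f n m = of_int (n - m)"
proof -
  have "graded_mult f (witt_basis m) (witt_basis n) (m + n) - graded_mult f (witt_basis n) (witt_basis m) (m + n)
      = witt_bracket (witt_basis m) (witt_basis n) (m + n)"
    using assms witt_basis_in_space unfolding compatible_LSA_on_witt_def by blast
  then show ?thesis unfolding witt_bracket_def graded_mult_basis_left by (simp add: witt_basis_def)
qed

lemma witt_linear_add:
  "witt_linear \<phi> \<Longrightarrow> x \<in> witt_space \<Longrightarrow> y \<in> witt_space \<Longrightarrow> \<phi> (\<lambda>n. x n + y n) = (\<lambda>n. \<phi> x n + \<phi> y n)"
  by (simp add: witt_linear_def)

lemma witt_linear_scale:
  "witt_linear \<phi> \<Longrightarrow> x \<in> witt_space \<Longrightarrow> \<phi> (\<lambda>n. c * x n) = (\<lambda>n. c * \<phi> x n)"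
  by (simp add: witt_linear_def)

lemma witt_linear_zero: "witt_linear \<phi> \<Longrightarrow> \<phi> (\<lambda>k. 0) = (\<lambda>k. 0)"
  using witt_linear_scale[OF _ zero_in_witt_space, of \<phi> 0] by simp

lemma witt_linear_sum_basis:
  assumes "witt_linear \<phi>" "finite F"
  shows "\<phi> (\<lambda>k. \<Sum>n\<in>F. c n * witt_basis n k) = (\<lambda>k. \<Sum>n\<in>F. c n * \<phi> (witt_basis n) k)"
  using assms(2)
proof (induction F rule: finite_induct)
  case empty
  then show ?case using witt_linear_zero[OF assms(1)] by simp
next
  case (insert a F)
  have "\<phi> (\<lambda>k. \<Sum>n\<in>insert a F. c n * witt_basis n k)
      = \<phi> (\<lambda>k. c a * witt_basis a k + (\<Sum>n\<in>F. c n * witt_basis n k))"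
    using insert by simp
  also have "\<dots> = (\<lambda>k. \<phi> (\<lambda>k. c a * witt_basis a k) k + \<phi> (\<lambda>k. \<Sum>n\<in>F. c n * witt_basis n k) k)"
    by (rule witt_linear_add[OF assms(1) witt_space_scale[OF witt_basis_in_space]
          witt_space_sum_basis[OF insert(1)]])
  also have "\<phi> (\<lambda>k. c a * witt_basis a k) = (\<lambda>k. c a * \<phi> (witt_basis a) k)"
    by (rule witt_linear_scale[OF assms(1) witt_basis_in_space])
  finally show ?case using insert by simp
qed

lemma witt_linear_basis_expansion:
  assumes "witt_linear \<phi>" "x \<in> witt_space"
  shows "\<phi> x = (\<lambda>k. \<Sum>n\<in>{n. x n \<noteq> 0}. x n * \<phi> (witt_basis n) k)"
proof -
  have "finite {n. x n \<noteq> 0}" using assms(2) unfolding witt_space_def by simp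
  then show ?thesis
    using witt_space_basis_expansion[OF assms(2)] witt_linear_sum_basis[OF assms(1)] by metis
qed

lemma witt_linear_bij_basis_nonzero:
  assumes "bij_betw \<phi> witt_space witt_space" "witt_linear \<phi>"
  shows "\<phi> (witt_basis n) \<noteq> (\<lambda>k. 0)"
proof
  assume "\<phi> (witt_basis n) = (\<lambda>k. 0)"
  then have "\<phi> (witt_basis n) = \<phi> (\<lambda>k. 0)" using witt_linear_zero[OF assms(2)] by simp
  then have "witt_basis n = (\<lambda>k. 0)"
    using bij_betw_imp_inj_on[OF assms(1)] witt_basis_in_space zero_in_witt_space by (meson inj_onD)
  then show False by (metis witt_basis_def zero_neq_one)
qed

lemma witt_linear_surj_basis_coordinate:
  assumes "bij_betw \<phi> witt_space witt_space" "witt_linear \<phi>"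
  shows "\<exists>n. \<phi> (witt_basis n) k \<noteq> 0"
proof (rule ccontr)
  assume none: "\<nexists>n. \<phi> (witt_basis n) k \<noteq> 0"
  obtain x where "x \<in> witt_space" and x: "\<phi> x = witt_basis k"
    using assms(1) witt_basis_in_space unfolding bij_betw_def by (metis imageE)
  then have "\<phi> x k = 0"
    unfolding witt_linear_basis_expansion[OF assms(2) \<open>x \<in> witt_space\<close>] using none by simp
  then show False using x by (simp add: witt_basis_def)
qed

lemma witt_bracket_single_term:
  assumes "finite {j. h j \<noteq> 0}" and "h K \<noteq> 0"
    and others: "\<And>j. h j \<noteq> 0 \<Longrightarrow> j \<noteq> K \<Longrightarrow> v (K + p - j) = 0"
  shows "witt_bracket h v (K + p) = h K * v p * of_int (p - K)"
proof -
  let ?S = "{j. h j \<noteq> 0}"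
  have "witt_bracket h v (K + p)
      = h K * v p * of_int (p - K) + (\<Sum>j\<in>?S - {K}. h j * v (K + p - j) * of_int (K + p - j - j))"
    unfolding witt_bracket_eq_sum using assms(2) by (subst sum.remove[OF assms(1), of K]) simp_all
  also have "(\<Sum>j\<in>?S - {K}. h j * v (K + p - j) * of_int (K + p - j - j)) = 0"
    using others by (intro sum.neutral) auto
  finally show ?thesis by simp
qed

text \<open>If \<open>p\<close> is the top degree of \<open>v\<close>, the coefficient of \<open>ad h v\<close> in degree \<open>K + p\<close> is
  \<open>h\<^sub>K v\<^sub>p (p - K)\<close>, while the eigenvector equation makes it vanish, so \<open>p = K\<close>.\<close>

lemma ad_eigenvector_above_top_degree:
  assumes hf: "finite {j. h j \<noteq> 0}" and vf: "finite {j. v j \<noteq> 0}"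
    and hK: "h K \<noteq> 0" and top: "\<And>j. h j \<noteq> 0 \<Longrightarrow> j \<le> K" and "K > 0"
    and eig: "witt_bracket h v = (\<lambda>k. c * v k)"
    and "k > K"
  shows "v k = 0"
proof (cases "{j. v j \<noteq> 0} = {}")
  case False
  define p where "p = Max {j. v j \<noteq> 0}"
  have vp: "v p \<noteq> 0" using Max_in[OF vf False] unfolding p_def by simp
  have pmax: "v j \<noteq> 0 \<Longrightarrow> j \<le> p" for j using vf unfolding p_def by simp
  have "witt_bracket h v (K + p) = h K * v p * of_int (p - K)"
  proof (rule witt_bracket_single_term[OF hf hK])
    fix j assume "h j \<noteq> 0" "j \<noteq> K"
    with top have "j < K" by force
    then show "v (K + p - j) = 0" using pmax[of "K + p - j"] by force
  qed
  moreover have "v (K + p) = 0" using pmax[of "K + p"] \<open>K > 0\<close> by force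
  ultimately have "p = K" using eig hK vp by (metis mult_eq_0_iff of_int_eq_0_iff right_minus_eq)
  then show ?thesis using pmax \<open>k > K\<close> by force
qed simp

lemma ad_eigenvector_below_bottom_degree:
  assumes hf: "finite {j. h j \<noteq> 0}" and vf: "finite {j. v j \<noteq> 0}"
    and hK: "h K \<noteq> 0" and bottom: "\<And>j. h j \<noteq> 0 \<Longrightarrow> K \<le> j" and "K < 0"
    and eig: "witt_bracket h v = (\<lambda>k. c * v k)"
    and "k < K"
  shows "v k = 0"
proof (cases "{j. v j \<noteq> 0} = {}")
  case False
  define p where "p = Min {j. v j \<noteq> 0}"
  have vp: "v p \<noteq> 0" using Min_in[OF vf False] unfolding p_def by simp
  have pmin: "v j \<noteq> 0 \<Longrightarrow> p \<le> j" for j using vf unfolding p_def by simp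
  have "witt_bracket h v (K + p) = h K * v p * of_int (p - K)"
  proof (rule witt_bracket_single_term[OF hf hK])
    fix j assume "h j \<noteq> 0" "j \<noteq> K"
    with bottom have "K < j" by force
    then show "v (K + p - j) = 0" using pmin[of "K + p - j"] by force
  qed
  moreover have "v (K + p) = 0" using pmin[of "K + p"] \<open>K < 0\<close> by force
  ultimately have "p = K" using eig hK vp by (metis mult_eq_0_iff of_int_eq_0_iff right_minus_eq)
  then show ?thesis using pmin \<open>k < K\<close> by force
qed simp

lemma LSA_hom_bracket_basis:
  assumes "compatible_LSA_on_witt f1" "compatible_LSA_on_witt f2"
    and into: "\<phi> ` witt_space \<subseteq> witt_space" and lin: "witt_linear \<phi>"
    and hom: "\<forall>x\<in>witt_space. \<forall>y\<in>witt_space. \<phi> (graded_mult f1 x y) = graded_mult f2 (\<phi> x) (\<phi> y)"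
  shows "witt_bracket (\<phi> (witt_basis m)) (\<phi> (witt_basis n))
       = (\<lambda>k. of_int (n - m) * \<phi> (witt_basis (m + n)) k)"
proof (rule ext)
  fix k
  have product: "graded_mult f2 (\<phi> (witt_basis i)) (\<phi> (witt_basis j)) = (\<lambda>k. f1 i j * \<phi> (witt_basis (i + j)) k)"
    for i j
    using hom[rule_format, OF witt_basis_in_space witt_basis_in_space, of i j]
      witt_linear_scale[OF lin witt_basis_in_space]
    by (simp add: graded_mult_basis)
  have "witt_bracket (\<phi> (witt_basis m)) (\<phi> (witt_basis n)) k
      = graded_mult f2 (\<phi> (witt_basis m)) (\<phi> (witt_basis n)) k
        - graded_mult f2 (\<phi> (witt_basis n)) (\<phi> (witt_basis m)) k"
    using assms(2) into witt_basis_in_space unfolding compatible_LSA_on_witt_def by (metis image_subset_iff)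
  also have "\<dots> = (f1 m n - f1 n m) * \<phi> (witt_basis (m + n)) k"
    by (simp add: product add.commute[of n m] algebra_simps)
  also have "\<dots> = of_int (n - m) * \<phi> (witt_basis (m + n)) k"
    by (simp add: compatible_LSA_commutator_basis[OF assms(1)])
  finally show "witt_bracket (\<phi> (witt_basis m)) (\<phi> (witt_basis n)) k
      = of_int (n - m) * \<phi> (witt_basis (m + n)) k" .
qed

lemma ad_eigenbasis_support_zero:
  assumes iso: "bij_betw \<phi> witt_space witt_space" "witt_linear \<phi>" and "h \<in> witt_space"
    and eig: "\<And>n. witt_bracket h (\<phi> (witt_basis n)) = (\<lambda>k. of_int n * \<phi> (witt_basis n) k)"
    and "h j \<noteq> 0"
  shows "j = 0"
proof -
  let ?S = "{j. h j \<noteq> 0}"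
  have hf: "finite ?S" using \<open>h \<in> witt_space\<close> unfolding witt_space_def by simp
  have vf: "finite {k. \<phi> (witt_basis n) k \<noteq> 0}" for n
    using bij_betw_apply[OF iso(1) witt_basis_in_space] unfolding witt_space_def by simp
  have Sne: "?S \<noteq> {}" using \<open>h j \<noteq> 0\<close> by blast
  define K L where "K = Max ?S" and "L = Min ?S"
  have hK: "h K \<noteq> 0" and hL: "h L \<noteq> 0"
    using Max_in[OF hf Sne] Min_in[OF hf Sne] unfolding K_def L_def by simp_all
  have top: "\<And>i. h i \<noteq> 0 \<Longrightarrow> i \<le> K" and bottom: "\<And>i. h i \<noteq> 0 \<Longrightarrow> L \<le> i"
    using hf unfolding K_def L_def by simp_all
  have "\<not> K > 0"
  proof
    assume "K > 0"
    obtain n where "\<phi> (witt_basis n) (K + 1) \<noteq> 0"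
      using witt_linear_surj_basis_coordinate[OF iso] by blast
    moreover have "\<phi> (witt_basis n) (K + 1) = 0"
      using ad_eigenvector_above_top_degree[OF hf vf hK top \<open>K > 0\<close> eig] by simp
    ultimately show False by simp
  qed
  moreover have "\<not> L < 0"
  proof
    assume "L < 0"
    obtain n where "\<phi> (witt_basis n) (L - 1) \<noteq> 0"
      using witt_linear_surj_basis_coordinate[OF iso] by blast
    moreover have "\<phi> (witt_basis n) (L - 1) = 0"
      using ad_eigenvector_below_bottom_degree[OF hf vf hL bottom \<open>L < 0\<close> eig] by simp
    ultimately show False by simp
  qed
  ultimately show ?thesis using top[OF \<open>h j \<noteq> 0\<close>] bottom[OF \<open>h j \<noteq> 0\<close>] by linarith
qed

lemma ad_eigenbasis_diagonal:
  assumes iso: "bij_betw \<phi> witt_space witt_space" "witt_linear \<phi>"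
    and degree_zero: "\<And>j. h j \<noteq> 0 \<Longrightarrow> j = 0"
    and eig: "\<And>n. witt_bracket h (\<phi> (witt_basis n)) = (\<lambda>k. of_int n * \<phi> (witt_basis n) k)"
  obtains \<epsilon> :: int and a where "\<epsilon> = 1 \<or> \<epsilon> = -1" "\<And>n. a n \<noteq> 0"
    "\<And>n. \<phi> (witt_basis n) = (\<lambda>k. a n * witt_basis (\<epsilon> * n) k)"
proof -
  have "{j. h j \<noteq> 0} = (if h 0 = 0 then {} else {0})" using degree_zero by auto
  then have bracket: "witt_bracket h v k = h 0 * v k * of_int k" for v k
    by (simp add: witt_bracket_eq_sum)
  have eigenvalue: "of_int n = h 0 * of_int k" if "\<phi> (witt_basis n) k \<noteq> 0" for n k
  proof -
    have "\<phi> (witt_basis n) k * of_int n = witt_bracket h (\<phi> (witt_basis n)) k"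
      using fun_cong[OF eig[of n], of k] by (simp add: mult.commute)
    also have "\<dots> = \<phi> (witt_basis n) k * (h 0 * of_int k)"
      by (simp add: bracket algebra_simps)
    finally show ?thesis using that by simp
  qed
  obtain \<epsilon> where "\<phi> (witt_basis \<epsilon>) 1 \<noteq> 0" using witt_linear_surj_basis_coordinate[OF iso] by blast
  then have h0: "h 0 = of_int \<epsilon>" using eigenvalue by fastforce
  obtain k1 where "\<phi> (witt_basis 1) k1 \<noteq> 0" using witt_linear_bij_basis_nonzero[OF iso] by blast
  then have "of_int (\<epsilon> * k1) = (1 :: complex)" using eigenvalue[of 1 k1] h0 by simp
  then have "\<epsilon> * k1 = 1" by (simp only: of_int_eq_1_iff)
  then have \<epsilon>: "\<epsilon> = 1 \<or> \<epsilon> = -1" by (auto simp: zmult_eq_1_iff)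
  have support: "k = \<epsilon> * n" if "\<phi> (witt_basis n) k \<noteq> 0" for n k
  proof -
    have "of_int n = (of_int (\<epsilon> * k) :: complex)" using eigenvalue[OF that] h0 by simp
    then have "n = \<epsilon> * k" by (simp only: of_int_eq_iff)
    then show ?thesis using \<epsilon> by auto
  qed
  define a where "a n = \<phi> (witt_basis n) (\<epsilon> * n)" for n
  show thesis
  proof (rule that[OF \<epsilon>])
    show "a n \<noteq> 0" for n
      using witt_linear_bij_basis_nonzero[OF iso, of n] support unfolding a_def by fastforce
    show "\<phi> (witt_basis n) = (\<lambda>k. a n * witt_basis (\<epsilon> * n) k)" for n
      using support[of n] unfolding a_def witt_basis_def by fastforce
  qed
qed

lemma LSA_hom_diagonal_structure_constants:
  assumes lin: "witt_linear \<phi>"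
    and hom: "\<forall>x\<in>witt_space. \<forall>y\<in>witt_space. \<phi> (graded_mult f1 x y) = graded_mult f2 (\<phi> x) (\<phi> y)"
    and diagonal: "\<And>n. \<phi> (witt_basis n) = (\<lambda>k. a n * witt_basis (\<epsilon> * n) k)"
  shows "f1 m n * a (m + n) = a m * a n * f2 (\<epsilon> * m) (\<epsilon> * n)"
proof -
  have "\<phi> (graded_mult f1 (witt_basis m) (witt_basis n)) (\<epsilon> * (m + n)) = f1 m n * a (m + n)"
    unfolding graded_mult_basis witt_linear_scale[OF lin witt_basis_in_space] diagonal
    by (simp add: witt_basis_def)
  moreover have "\<epsilon> * (m + n) - \<epsilon> * m = \<epsilon> * n" by (simp add: algebra_simps)
  then have "graded_mult f2 (\<phi> (witt_basis m)) (\<phi> (witt_basis n)) (\<epsilon> * (m + n))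
      = a m * a n * f2 (\<epsilon> * m) (\<epsilon> * n)"
    unfolding diagonal graded_mult_scaled_basis_left by (simp add: witt_basis_def)
  ultimately show ?thesis using hom witt_basis_in_space by metis
qed

text \<open>Multiplicativity off the diagonal already forces it on the diagonal: \<open>b (2k) b 1 = b (2k + 1)\<close>
  expands to \<open>b k\<^sup>2 b 1\<close> through \<open>2k + 1 = k + (k + 1)\<close>, and the remaining case \<open>k = 1\<close> is read
  off from the two splittings \<open>5 = 2 + 3 = 1 + 4\<close>.\<close>

lemma mult_of_mult_off_diagonal:
  fixes b :: "int \<Rightarrow> 'a :: idom"
  assumes nonzero: "\<And>n. b n \<noteq> 0" and off_diagonal: "\<And>m n. m \<noteq> n \<Longrightarrow> b (m + n) = b m * b n"
  shows "b (m + n) = b m * b n"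
proof (cases "m = n")
  case True
  have square: "b (2 * k) = b k * b k" for k
  proof (cases "k = 1")
    case False
    have "2 * k \<noteq> 1" by presburger
    then have "b (2 * k) * b 1 = b (2 * k + 1)" using off_diagonal[of "2 * k" 1] by simp
    also have "\<dots> = b k * b (k + 1)" using off_diagonal[of k "k + 1"] by (simp add: algebra_simps)
    also have "\<dots> = b k * b k * b 1" using off_diagonal[of k 1] False by simp
    finally show ?thesis using nonzero[of 1] by simp
  next
    case True
    have "b 2 * (b 2 * b 1) = b 1 * (b 1 * (b 2 * b 1))"
      using off_diagonal[of 2 3] off_diagonal[of 1 4] off_diagonal[of 2 1] off_diagonal[of 1 3] by simp
    then have "b 2 * (b 2 * b 1) = b 2 * (b 1 * b 1 * b 1)" by (simp only: ac_simps)
    then have "b 2 = b 1 * b 1" using nonzero[of 1] nonzero[of 2] by simp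
    then show ?thesis using True by simp
  qed
  show ?thesis using True square[of n] by (simp add: mult_2[symmetric])
qed (rule off_diagonal)

lemma structure_constants_of_diagonal_iso:
  fixes f1 f2 :: "int \<Rightarrow> int \<Rightarrow> complex"
  assumes commutator1: "\<And>m n. f1 m n - f1 n m = of_int (n - m)"
    and commutator2: "\<And>m n. f2 m n - f2 n m = of_int (n - m)"
    and \<epsilon>: "\<epsilon> = 1 \<or> \<epsilon> = -1" and nonzero: "\<And>n. a n \<noteq> 0"
    and constants: "\<And>m n. f1 m n * a (m + n) = a m * a n * f2 (\<epsilon> * m) (\<epsilon> * n)"
  shows "f1 m n = of_int \<epsilon> * f2 (\<epsilon> * m) (\<epsilon> * n)"
proof -
  have \<epsilon>_square: "of_int \<epsilon> * of_int \<epsilon> = (1 :: complex)" using \<epsilon> by auto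
  have off_diagonal: "a (m + n) = of_int \<epsilon> * a m * a n" if "m \<noteq> n" for m n
  proof -
    have "of_int (n - m) * a (m + n) = (f1 m n - f1 n m) * a (m + n)"
      by (simp add: commutator1)
    also have "\<dots> = f1 m n * a (m + n) - f1 n m * a (n + m)"
      by (simp add: left_diff_distrib add.commute[of n m])
    also have "\<dots> = a m * a n * (f2 (\<epsilon> * m) (\<epsilon> * n) - f2 (\<epsilon> * n) (\<epsilon> * m))"
      using constants[of m n] constants[of n m] by (simp add: algebra_simps)
    also have "\<dots> = of_int (n - m) * (of_int \<epsilon> * a m * a n)"
      by (simp add: commutator2 algebra_simps)
    finally show ?thesis using that by simp
  qed
  have "of_int \<epsilon> * a (m + n) = of_int \<epsilon> * a m * (of_int \<epsilon> * a n)" for m n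
  proof (rule mult_of_mult_off_diagonal[where b = "\<lambda>n. of_int \<epsilon> * a n"])
    show "of_int \<epsilon> * a n \<noteq> 0" for n using nonzero \<epsilon> by auto
    show "of_int \<epsilon> * a (m + n) = of_int \<epsilon> * a m * (of_int \<epsilon> * a n)" if "m \<noteq> n" for m n
      using off_diagonal[OF that] \<epsilon>_square by (simp add: algebra_simps)
  qed
  then have "a m * a n = of_int \<epsilon> * a (m + n)" using \<epsilon> by auto
  then have "f1 m n * a (m + n) = (of_int \<epsilon> * f2 (\<epsilon> * m) (\<epsilon> * n)) * a (m + n)"
    using constants[of m n] by simp
  then show ?thesis using nonzero[of "m + n"] by simp
qed

theorem proposition3p10:
  fixes f1 f2 :: "int \<Rightarrow> int \<Rightarrow> complex"
  assumes "compatible_LSA_on_witt f1"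
    and "compatible_LSA_on_witt f2"
    and "LSA_isomorphic f1 f2"
  shows "(\<forall>m n. f1 m n = f2 m n) \<or> (\<forall>m n. f1 m n = - f2 (- m) (- n))"
proof -
  obtain \<phi> where bij: "bij_betw \<phi> witt_space witt_space" and lin: "witt_linear \<phi>"
    and hom: "\<forall>x\<in>witt_space. \<forall>y\<in>witt_space. \<phi> (graded_mult f1 x y) = graded_mult f2 (\<phi> x) (\<phi> y)"
    using assms(3) unfolding LSA_isomorphic_iff by blast
  let ?h = "\<phi> (witt_basis 0)"
  have eig: "witt_bracket ?h (\<phi> (witt_basis n)) = (\<lambda>k. of_int n * \<phi> (witt_basis n) k)" for n
    using LSA_hom_bracket_basis[OF assms(1,2) _ lin hom, of 0 n] bij by (simp add: bij_betw_def)
  have "?h \<in> witt_space" using bij_betw_apply[OF bij witt_basis_in_space] .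
  then have "?h j \<noteq> 0 \<Longrightarrow> j = 0" for j using ad_eigenbasis_support_zero[OF bij lin _ eig] by blast
  then obtain \<epsilon> a where \<epsilon>: "\<epsilon> = 1 \<or> \<epsilon> = -1" and nonzero: "\<And>n. a n \<noteq> 0"
    and diagonal: "\<And>n. \<phi> (witt_basis n) = (\<lambda>k. a n * witt_basis (\<epsilon> * n) k)"
    using ad_eigenbasis_diagonal[OF bij lin _ eig] by blast
  have "f1 m n = of_int \<epsilon> * f2 (\<epsilon> * m) (\<epsilon> * n)" for m n
    using structure_constants_of_diagonal_iso[OF compatible_LSA_commutator_basis[OF assms(1)]
        compatible_LSA_commutator_basis[OF assms(2)] \<epsilon> nonzero
        LSA_hom_diagonal_structure_constants[OF lin hom diagonal]] .
  then show ?thesis using \<epsilon> by auto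
qed

end
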